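(* Let $n\geq 2$ and $\alpha_2,\dots,\alpha_n\in\mathbb{C}$ with $\alpha_2\neq 0$. Then the transposed Poisson algebra $\mathbf{TP}(\alpha_2,\dots,\alpha_n)$ is isomorphic to $\mathbf{TP}(1,0,\dots,0)$, i.e. to $\mu_0^n$ with $e_i\cdot e_j=e_{i+j}$ ($2\leq i+j\leq n$) and $[e_i,e_j]=(j-i)e_{i+j-1}$ ($3\leq i+j\leq n+1$).
   Context: $\mu_0^n$ is the complex commutative associative algebra with basis $\{e_1,\dots,e_n\}$ and $e_i\cdot e_j=e_{i+j}$ for $2\leq i+j\leq n$, other products zero. For $\alpha_2,\dots,\alpha_n\in\mathbb{C}$, $\mathbf{TP}(\alpha_2,\dots,\alpha_n)$ denotes $\mu_0^n$ with its associative product together with the bracket $[e_i,e_j]=(j-i)\sum_{t=i+j-1}^{n}\alpha_{t-i-j+3}e_t$ for $3\leq i+j\leq n+1$, other brackets of basis elements zero. Isomorphisms are linear bijections preserving both operations. *)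

theory Defs
  imports Complex_Main
begin

text \<open>Elements of the n-dimensional algebra with basis e_1,...,e_n are represented by
  their coordinate functions x :: nat \<Rightarrow> complex, where x t is the coefficient of e_t;
  coordinates outside {1..n} are required to vanish.\<close>

definition carrierV :: "nat \<Rightarrow> (nat \<Rightarrow> complex) set" where
  "carrierV n = {x. \<forall>t. t \<notin> {1..n} \<longrightarrow> x t = 0}"

definition mu0_mult :: "nat \<Rightarrow> (nat \<Rightarrow> complex) \<Rightarrow> (nat \<Rightarrow> complex) \<Rightarrow> (nat \<Rightarrow> complex)" where
  "mu0_mult n x y = (\<lambda>t. \<Sum>i\<in>{1..n}. \<Sum>j\<in>{1..n}.
      if i + j \<le> n \<and> t = i + j then x i * y j else 0)"

text \<open>Only the values alpha 2, ..., alpha n are used.\<close>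
definition TP_bracket :: "nat \<Rightarrow> (nat \<Rightarrow> complex) \<Rightarrow> (nat \<Rightarrow> complex) \<Rightarrow> (nat \<Rightarrow> complex) \<Rightarrow> (nat \<Rightarrow> complex)" where
  "TP_bracket n \<alpha> x y = (\<lambda>t. \<Sum>i\<in>{1..n}. \<Sum>j\<in>{1..n}.
      if 3 \<le> i + j \<and> i + j \<le> n + 1 \<and> i + j - 1 \<le> t \<and> t \<le> n
      then (of_int (int j - int i)) * \<alpha> (t + 3 - (i + j)) * x i * y j else 0)"

definition TP_iso :: "nat \<Rightarrow> (nat \<Rightarrow> complex) \<Rightarrow> (nat \<Rightarrow> complex) \<Rightarrow>
    ((nat \<Rightarrow> complex) \<Rightarrow> (nat \<Rightarrow> complex)) \<Rightarrow> bool" where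
  "TP_iso n \<alpha> \<beta> \<phi> \<longleftrightarrow>
     bij_betw \<phi> (carrierV n) (carrierV n) \<and>
     (\<forall>x\<in>carrierV n. \<forall>y\<in>carrierV n. \<phi> (\<lambda>t. x t + y t) = (\<lambda>t. \<phi> x t + \<phi> y t)) \<and>
     (\<forall>c. \<forall>x\<in>carrierV n. \<phi> (\<lambda>t. c * x t) = (\<lambda>t. c * \<phi> x t)) \<and>
     (\<forall>x\<in>carrierV n. \<forall>y\<in>carrierV n. \<phi> (mu0_mult n x y) = mu0_mult n (\<phi> x) (\<phi> y)) \<and>
     (\<forall>x\<in>carrierV n. \<forall>y\<in>carrierV n. \<phi> (TP_bracket n \<alpha> x y) = TP_bracket n \<beta> (\<phi> x) (\<phi> y))"

definition TP_isomorphic :: "nat \<Rightarrow> (nat \<Rightarrow> complex) \<Rightarrow> (nat \<Rightarrow> complex) \<Rightarrow> bool" where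
  "TP_isomorphic n \<alpha> \<beta> \<longleftrightarrow> (\<exists>\<phi>. TP_iso n \<alpha> \<beta> \<phi>)"

end

(* Identify mu_0^n with t C[[t]] modulo t^(n+1), e_i being t^i. The product becomes multiplication
   of series and the bracket of TP(alpha) becomes [f, g] = A (f g' - f' g) with
   A(t) = sum_k alpha_(k+2) t^k. The substitution f |-> f o s preserves products, and by the chain
   rule it carries A times the Wronskian to B times the Wronskian whenever A o s = B s'. For B = 1
   this is the autonomous equation s' = A(s); it has a solution with s(0) = 0 and
   s'(0) = A(0) = alpha_2 /= 0, so s is invertible under composition and the substitution is an
   isomorphism TP(alpha) -> TP(1,0,...,0). *)

theory Submission
  imports Defs "HOL-Computational_Algebra.Formal_Power_Series"
begin

unbundle fps_syntax

definition fps_wronskian :: "'a::comm_ring_1 fps \<Rightarrow> 'a fps \<Rightarrow> 'a fps" where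
  "fps_wronskian f g = f * fps_deriv g - fps_deriv f * g"

lemma fps_wronskian_compose:
  fixes f g s :: "'a::idom fps"
  assumes "s $ 0 = 0"
  shows "fps_wronskian (f oo s) (g oo s) = fps_deriv s * (fps_wronskian f g oo s)"
  unfolding fps_wronskian_def fps_compose_deriv[OF assms]
  by (simp add: fps_compose_mult_distrib[OF assms] fps_compose_sub_distrib algebra_simps)

lemma fps_wronskian_X_power:
  assumes "i \<ge> 1" "j \<ge> 1"
  shows "fps_wronskian (fps_X ^ i) (fps_X ^ j :: 'a::comm_ring_1 fps) =
    fps_const (of_int (int j - int i)) * fps_X ^ (i + j - 1)"
proof (rule fps_ext)
  fix k
  have left: "(fps_X ^ i * fps_deriv (fps_X ^ j :: 'a fps)) $ k =
      (if k + 1 = i + j then of_nat j else 0)"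
    using assms by (auto simp: fps_X_power_mult_nth)
  have right: "(fps_deriv (fps_X ^ i) * fps_X ^ j :: 'a fps) $ k =
      (if k + 1 = i + j then of_nat i else 0)"
    using assms by (auto simp: fps_X_power_mult_right_nth)
  show "fps_wronskian (fps_X ^ i) (fps_X ^ j :: 'a fps) $ k =
      (fps_const (of_int (int j - int i)) * fps_X ^ (i + j - 1)) $ k"
    using assms by (simp only: fps_wronskian_def fps_sub_nth left right) auto
qed

lemma fps_wronskian_sum_left: "fps_wronskian (sum f I) g = (\<Sum>i\<in>I. fps_wronskian (f i) g)"
  unfolding fps_wronskian_def fps_deriv_sum sum_distrib_right sum_subtractf ..

lemma fps_wronskian_sum_right: "fps_wronskian f (sum g J) = (\<Sum>j\<in>J. fps_wronskian f (g j))"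
  unfolding fps_wronskian_def fps_deriv_sum sum_distrib_left sum_subtractf ..

lemma fps_wronskian_const_mult_left:
  "fps_wronskian (fps_const c * f) g = fps_const c * fps_wronskian f g"
  unfolding fps_wronskian_def by (simp add: algebra_simps)

lemma fps_wronskian_const_mult_right:
  "fps_wronskian f (fps_const c * g) = fps_const c * fps_wronskian f g"
  unfolding fps_wronskian_def by (simp add: algebra_simps)

lemma fps_cutoff_mult: "fps_cutoff m (f * g) = fps_cutoff m (fps_cutoff m f * fps_cutoff m g)"
  by (rule fps_ext) (simp add: fps_cutoff_left_mult_nth fps_cutoff_right_mult_nth)

lemma fps_cutoff_compose: "fps_cutoff m (f oo s) = fps_cutoff m (fps_cutoff m f oo s)"
  by (rule fps_ext) (simp add: fps_compose_nth)

(* Coefficient k of f g' involves g up to degree k + 1, but that coefficient only meets f $ 0. *)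
lemma fps_mult_deriv_nth_cutoff:
  fixes f g :: "'a::comm_ring_1 fps"
  assumes "f $ 0 = 0" and "k < m"
  shows "(f * fps_deriv g) $ k = (fps_cutoff m f * fps_deriv (fps_cutoff m g)) $ k"
  unfolding fps_mult_nth
proof (intro sum.cong refl)
  fix i assume "i \<in> {0..k}"
  then show "f $ i * fps_deriv g $ (k - i) =
      fps_cutoff m f $ i * fps_deriv (fps_cutoff m g) $ (k - i)"
    using assms by (cases "i = 0") auto
qed

lemma fps_cutoff_wronskian:
  fixes f g :: "'a::comm_ring_1 fps"
  assumes "f $ 0 = 0" and "g $ 0 = 0"
  shows "fps_cutoff m (fps_wronskian f g) =
    fps_cutoff m (fps_wronskian (fps_cutoff m f) (fps_cutoff m g))"
  by (rule fps_ext) (simp add: fps_wronskian_def mult.commute[of "fps_deriv _"]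
      fps_mult_deriv_nth_cutoff[OF assms(1)] fps_mult_deriv_nth_cutoff[OF assms(2)])

lemma fps_autonomous_ode_solution:
  fixes A :: "'a::field_char_0 fps"
  assumes "A $ 0 \<noteq> 0"
  obtains s where "s $ 0 = 0" and "s $ 1 \<noteq> 0" and "fps_deriv s = A oo s"
proof
  \<comment> \<open>s is the compositional inverse of a primitive of 1/A.\<close>
  define r where "r = fps_integral0 (inverse A)"
  have r0: "r $ 0 = 0" and r1: "r $ 1 \<noteq> 0"
    using assms fps_integral_nth_0_Suc(2)[of "inverse A" 0 0] by (simp_all add: r_def)
  show s0: "fps_inv r $ 0 = 0" by (simp add: fps_inv_def)
  have "fps_deriv (fps_inv r) = inverse (inverse A oo fps_inv r)"
    using fps_inv_deriv[OF r0 r1] by (simp add: r_def fps_deriv_fps_integral)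
  also have "\<dots> = A oo fps_inv r"
    using assms by (simp add: fps_inverse_compose[OF s0])
  finally show ds: "fps_deriv (fps_inv r) = A oo fps_inv r" .
  show "fps_inv r $ 1 \<noteq> 0"
    using arg_cong[OF ds, of "\<lambda>f. f $ 0"] assms by simp
qed

lemma carrierV_zero: "x \<in> carrierV n \<Longrightarrow> x 0 = 0"
  unfolding carrierV_def by auto

lemma Abs_fps_carrierV:
  assumes "x \<in> carrierV n"
  shows "Abs_fps x = (\<Sum>i\<in>{1..n}. fps_const (x i) * fps_X ^ i)"
proof (rule fps_ext)
  fix k
  have "(\<Sum>i\<in>{1..n}. fps_const (x i) * fps_X ^ i) $ k =
      (\<Sum>i\<in>{1..n}. x i * (if k = i then 1 else 0))"
    by (simp add: fps_sum_nth)
  also have "\<dots> = (\<Sum>i\<in>{1..n}. if i = k then x k else 0)"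
    by (intro sum.cong) auto
  also have "\<dots> = x k"
    using assms by (simp add: carrierV_def)
  finally show "Abs_fps x $ k = (\<Sum>i\<in>{1..n}. fps_const (x i) * fps_X ^ i) $ k"
    by simp
qed

lemma Abs_fps_mu0_mult:
  assumes x: "x \<in> carrierV n" and y: "y \<in> carrierV n"
  shows "Abs_fps (mu0_mult n x y) = fps_cutoff (Suc n) (Abs_fps x * Abs_fps y)"
proof -
  have "Abs_fps x * Abs_fps y =
      (\<Sum>i\<in>{1..n}. \<Sum>j\<in>{1..n}. fps_const (x i * y j) * fps_X ^ (i + j))"
    unfolding Abs_fps_carrierV[OF x] Abs_fps_carrierV[OF y] sum_product
    by (simp add: power_add algebra_simps flip: fps_const_mult)
  then have "(Abs_fps x * Abs_fps y) $ t =
      (\<Sum>i\<in>{1..n}. \<Sum>j\<in>{1..n}. x i * y j * (if t = i + j then 1 else 0))" for t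
    by (simp add: fps_sum_nth)
  then show ?thesis
    by (intro fps_ext) (auto simp: mu0_mult_def intro!: sum.cong sum.neutral)
qed

definition TP_series :: "(nat \<Rightarrow> complex) \<Rightarrow> complex fps" where
  "TP_series \<alpha> = Abs_fps (\<lambda>k. \<alpha> (k + 2))"

lemma fps_wronskian_Abs_fps_carrierV:
  assumes x: "x \<in> carrierV n" and y: "y \<in> carrierV n"
  shows "fps_wronskian (Abs_fps x) (Abs_fps y) = (\<Sum>i\<in>{1..n}. \<Sum>j\<in>{1..n}.
    fps_const (x i * y j * of_int (int j - int i)) * fps_X ^ (i + j - 1))"
  unfolding Abs_fps_carrierV[OF x] Abs_fps_carrierV[OF y] fps_wronskian_sum_left
  unfolding fps_wronskian_sum_right fps_wronskian_const_mult_left fps_wronskian_const_mult_right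
  by (intro sum.cong refl) (simp add: fps_wronskian_X_power mult_ac)

lemma Abs_fps_TP_bracket:
  assumes x: "x \<in> carrierV n" and y: "y \<in> carrierV n"
  shows "Abs_fps (TP_bracket n \<alpha> x y) =
    fps_cutoff (Suc n) (TP_series \<alpha> * fps_wronskian (Abs_fps x) (Abs_fps y))"
proof (rule fps_ext)
  fix t
  have "TP_series \<alpha> * fps_wronskian (Abs_fps x) (Abs_fps y) =
      (\<Sum>i\<in>{1..n}. \<Sum>j\<in>{1..n}. fps_const (x i * y j * of_int (int j - int i)) *
        (fps_X ^ (i + j - 1) * TP_series \<alpha>))"
    by (simp only: fps_wronskian_Abs_fps_carrierV[OF x y] mult.commute[of "TP_series \<alpha>"]
        sum_distrib_right mult.assoc)
  then have "(TP_series \<alpha> * fps_wronskian (Abs_fps x) (Abs_fps y)) $ t =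
      (\<Sum>i\<in>{1..n}. \<Sum>j\<in>{1..n}. x i * y j * of_int (int j - int i) *
        (if t < i + j - 1 then 0 else TP_series \<alpha> $ (t - (i + j - 1))))"
    by (simp add: fps_sum_nth fps_X_power_mult_nth) (auto intro!: sum.cong)
  moreover have "TP_bracket n \<alpha> x y t = (\<Sum>i\<in>{1..n}. \<Sum>j\<in>{1..n}.
      x i * y j * of_int (int j - int i) *
        (if t < i + j - 1 then 0 else TP_series \<alpha> $ (t - (i + j - 1))))" if "t \<le> n"
    unfolding TP_bracket_def
  proof (intro sum.cong refl)
    fix i j assume "i \<in> {1..n}" and "j \<in> {1..n}"
    moreover have "t + 3 - (i + j) = t - (i + j - 1) + 2" if "i + j - 1 \<le> t" "i \<ge> 1"
      using that by linarith
    ultimately show "(if 3 \<le> i + j \<and> i + j \<le> n + 1 \<and> i + j - 1 \<le> t \<and> t \<le> n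
        then of_int (int j - int i) * \<alpha> (t + 3 - (i + j)) * x i * y j else 0) =
      x i * y j * of_int (int j - int i) *
        (if t < i + j - 1 then 0 else TP_series \<alpha> $ (t - (i + j - 1)))"
      using \<open>t \<le> n\<close> by (cases "i + j = 2") (auto simp: TP_series_def algebra_simps)
  qed
  ultimately show "Abs_fps (TP_bracket n \<alpha> x y) $ t =
      fps_cutoff (Suc n) (TP_series \<alpha> * fps_wronskian (Abs_fps x) (Abs_fps y)) $ t"
    by (simp add: TP_bracket_def)
qed

definition subst_map ::
    "nat \<Rightarrow> complex fps \<Rightarrow> (nat \<Rightarrow> complex) \<Rightarrow> nat \<Rightarrow> complex" where
  "subst_map n s x = fps_nth (fps_cutoff (Suc n) (Abs_fps x oo s))"

lemma Abs_fps_subst_map: "Abs_fps (subst_map n s x) = fps_cutoff (Suc n) (Abs_fps x oo s)"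
  by (simp add: subst_map_def fps_nth_inverse)

lemma subst_map_carrierV:
  assumes "x \<in> carrierV n"
  shows "subst_map n s x \<in> carrierV n"
  unfolding carrierV_def mem_Collect_eq
proof (intro allI impI)
  fix t assume "t \<notin> {1..n}"
  then show "subst_map n s x t = 0"
    using assms by (cases "t = 0") (auto simp: subst_map_def carrierV_def)
qed

lemma subst_map_subst_map:
  assumes "r $ 0 = 0" and "s $ 0 = 0"
  shows "subst_map n r (subst_map n s x) = subst_map n (s oo r) x"
  using assms by (simp add: subst_map_def fps_nth_inverse fps_compose_assoc
      flip: fps_cutoff_compose)

lemma subst_map_X: "x \<in> carrierV n \<Longrightarrow> subst_map n fps_X x = x"
  by (rule ext) (simp add: subst_map_def carrierV_def)

lemma bij_betw_subst_map:
  assumes s0: "s $ 0 = 0" and s1: "s $ 1 \<noteq> 0"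
  shows "bij_betw (subst_map n s) (carrierV n) (carrierV n)"
proof (rule bij_betw_byWitness[where f' = "subst_map n (fps_inv s)"])
  have r0: "fps_inv s $ 0 = 0"
    by (simp add: fps_inv_def)
  show "\<forall>x\<in>carrierV n. subst_map n (fps_inv s) (subst_map n s x) = x"
    by (simp add: subst_map_subst_map[OF r0 s0] fps_inv_right[OF s0 s1] subst_map_X)
  show "\<forall>x\<in>carrierV n. subst_map n s (subst_map n (fps_inv s) x) = x"
    by (simp add: subst_map_subst_map[OF s0 r0] fps_inv[OF s0 s1] subst_map_X)
qed (auto intro: subst_map_carrierV)

lemma subst_map_add:
  "subst_map n s (\<lambda>t. x t + y t) = (\<lambda>t. subst_map n s x t + subst_map n s y t)"
proof -
  have "Abs_fps (\<lambda>t. x t + y t) = Abs_fps x + Abs_fps y"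
    by (rule fps_ext) simp
  then show ?thesis
    by (intro ext) (simp add: subst_map_def fps_compose_add_distrib)
qed

lemma subst_map_scale: "subst_map n s (\<lambda>t. c * x t) = (\<lambda>t. c * subst_map n s x t)"
proof -
  have "Abs_fps (\<lambda>t. c * x t) = fps_const c * Abs_fps x"
    by (rule fps_ext) simp
  then show ?thesis
    by (auto simp: subst_map_def simp flip: fps_const_mult_apply_left)
qed

lemma subst_map_mu0_mult:
  assumes s0: "s $ 0 = 0" and x: "x \<in> carrierV n" and y: "y \<in> carrierV n"
  shows "subst_map n s (mu0_mult n x y) = mu0_mult n (subst_map n s x) (subst_map n s y)"
proof -
  have "subst_map n s (mu0_mult n x y) =
      fps_nth (fps_cutoff (Suc n) ((Abs_fps x oo s) * (Abs_fps y oo s)))"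
    by (simp add: subst_map_def Abs_fps_mu0_mult[OF x y] fps_compose_mult_distrib[OF s0]
        flip: fps_cutoff_compose)
  also have "\<dots> = fps_nth (fps_cutoff (Suc n)
      (Abs_fps (subst_map n s x) * Abs_fps (subst_map n s y)))"
    by (subst fps_cutoff_mult) (simp add: Abs_fps_subst_map)
  also have "\<dots> = mu0_mult n (subst_map n s x) (subst_map n s y)"
    by (simp add: subst_map_carrierV x y Abs_fps_inverse flip: Abs_fps_mu0_mult)
  finally show ?thesis .
qed

lemma subst_map_TP_bracket:
  assumes s0: "s $ 0 = 0" and series: "TP_series \<alpha> oo s = TP_series \<beta> * fps_deriv s"
    and x: "x \<in> carrierV n" and y: "y \<in> carrierV n"
  shows "subst_map n s (TP_bracket n \<alpha> x y) =
    TP_bracket n \<beta> (subst_map n s x) (subst_map n s y)"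
proof -
  have x0: "(Abs_fps x oo s) $ 0 = 0" and y0: "(Abs_fps y oo s) $ 0 = 0"
    using x y by (simp_all add: carrierV_zero)
  have "subst_map n s (TP_bracket n \<alpha> x y) = fps_nth (fps_cutoff (Suc n)
      ((TP_series \<alpha> oo s) * (fps_wronskian (Abs_fps x) (Abs_fps y) oo s)))"
    by (simp add: subst_map_def Abs_fps_TP_bracket[OF x y] fps_compose_mult_distrib[OF s0]
        flip: fps_cutoff_compose)
  also have "\<dots> = fps_nth (fps_cutoff (Suc n)
      (TP_series \<beta> * fps_wronskian (Abs_fps x oo s) (Abs_fps y oo s)))"
    by (simp add: series fps_wronskian_compose[OF s0] mult.assoc)
  also have "\<dots> = fps_nth (fps_cutoff (Suc n)
      (TP_series \<beta> * fps_wronskian (Abs_fps (subst_map n s x)) (Abs_fps (subst_map n s y))))"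
    unfolding Abs_fps_subst_map
    by (metis fps_cutoff_mult fps_cutoff_wronskian[OF x0 y0])
  also have "\<dots> = TP_bracket n \<beta> (subst_map n s x) (subst_map n s y)"
    by (simp add: subst_map_carrierV x y Abs_fps_inverse flip: Abs_fps_TP_bracket)
  finally show ?thesis .
qed

lemma TP_iso_subst_map:
  assumes "s $ 0 = 0" and "s $ 1 \<noteq> 0"
    and "TP_series \<alpha> oo s = TP_series \<beta> * fps_deriv s"
  shows "TP_iso n \<alpha> \<beta> (subst_map n s)"
  unfolding TP_iso_def
  using assms by (simp add: bij_betw_subst_map subst_map_add subst_map_scale
      subst_map_mu0_mult subst_map_TP_bracket)

theorem mainTheorem7:
  fixes n :: nat and \<alpha> :: "nat \<Rightarrow> complex"
  assumes "n \<ge> 2" and "\<alpha> 2 \<noteq> 0"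
  shows "TP_isomorphic n \<alpha> (\<lambda>k. if k = 2 then 1 else 0)"
proof -
  have "TP_series \<alpha> $ 0 \<noteq> 0"
    using assms(2) by (simp add: TP_series_def numeral_2_eq_2)
  then obtain s where s0: "s $ 0 = 0" and s1: "s $ 1 \<noteq> 0"
    and ode: "fps_deriv s = TP_series \<alpha> oo s"
    by (rule fps_autonomous_ode_solution)
  have "TP_series (\<lambda>k. if k = 2 then 1 else 0) = 1"
    by (rule fps_ext) (simp add: TP_series_def)
  with ode have
    "TP_series \<alpha> oo s = TP_series (\<lambda>k. if k = 2 then 1 else 0) * fps_deriv s"
    by simp
  then have "TP_iso n \<alpha> (\<lambda>k. if k = 2 then 1 else 0) (subst_map n s)"
    by (rule TP_iso_subst_map[OF s0 s1])
  then show ?thesis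
    unfolding TP_isomorphic_def by blast
qed

end
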